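(* For every $M>0$ there is a min-CICS instance $\mathbbm{I}=(\mathcal{F},\mathbb{M})$ with two MDPs $\mathbb{M}=(\mathcal{M}_1,\mathcal{M}_2)$ and the constraint $\mathcal{F}=\{\{1\},\{2\},\{1,2\}\}$ such that $\mathrm{ComGap}(\mathbbm{I})\ge M$; that is, the commitment gap of min-CICS is unbounded even for this single-selection constraint.
   Context: min-CICS: an instance $\mathbbm{I}=(\mathcal{F},\mathbb{M})$ consists of an upwards-closed family $\mathcal{F}\subseteq 2^{[n]}$ and $n$ acyclic Markov decision processes $\mathcal{M}_i$, each with a finite state set, root $\sigma_i$, actions $A_i(s)$ with nonnegative costs $c_i(a)$ and transition distributions $\Pi_i(s,a)$, and sink (terminal) states with nonnegative (possibly $+\infty$) values $v_i(t)$. A policy starts with all MDPs at their roots and repeatedly (adaptively) either advances some MDP in a non-terminal state by an action (paying its cost, random transition), or halts by selecting $S\in\mathcal{F}$ among MDPs currently in terminal states, paying $\sum_{i\in S}v_i(s_i)$. Its disutility is the expected total of action costs plus paid values; $\mathrm{OPT}(\mathbbm{I})$ is the minimum disutility over policies. A commitment $(\pi_1,\dots,\pi_n)$ assigns each state $s$ of $\mathcal{M}_i$ a distribution $\pi_i(s)$ over $A_i(s)$; a committing policy draws its action from $\pi_i(s)$ whenever it advances $\mathcal{M}_i$ at state $s$ (other choices may be adaptive). For min-CICS, $\mathrm{ComGap}(\mathbbm{I})=\inf\{\text{disutility of }\mathcal{T}:\mathcal{T}\text{ committing}\}/\mathrm{OPT}(\mathbbm{I})$. *)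

theory Defs
  imports "HOL-Probability.Probability"
begin

record mdp =
  m_states :: "nat set"
  m_root   :: nat
  m_acts   :: "nat \<Rightarrow> nat set"
  m_cost   :: "nat \<Rightarrow> real"
  m_trans  :: "nat \<Rightarrow> nat \<Rightarrow> nat pmf"
  m_val    :: "nat \<Rightarrow> ennreal"

definition terminal :: "mdp \<Rightarrow> nat \<Rightarrow> bool" where
  "terminal M s \<longleftrightarrow> m_acts M s = {}"

definition mdp_edges :: "mdp \<Rightarrow> (nat \<times> nat) set" where
  "mdp_edges M = {(s, t). s \<in> m_states M \<and> (\<exists>a \<in> m_acts M s. t \<in> set_pmf (m_trans M s a))}"

definition wf_mdp :: "mdp \<Rightarrow> bool" where
  "wf_mdp M \<longleftrightarrow> finite (m_states M) \<and> m_root M \<in> m_states M \<and>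
     (\<forall>s \<in> m_states M. finite (m_acts M s) \<and>
        (\<forall>a \<in> m_acts M s. 0 \<le> m_cost M a \<and> set_pmf (m_trans M s a) \<subseteq> m_states M)) \<and>
     acyclic (mdp_edges M)"

section \<open>min-CICS instances (MDPs indexed by 0,...,n-1)\<close>

record cics_instance =
  inst_n   :: nat
  inst_F   :: "nat set set"
  inst_M   :: "nat \<Rightarrow> mdp"

definition wf_instance :: "cics_instance \<Rightarrow> bool" where
  "wf_instance I \<longleftrightarrow>
     inst_F I \<subseteq> Pow {..<inst_n I} \<and>
     (\<forall>S \<in> inst_F I. \<forall>T. S \<subseteq> T \<and> T \<subseteq> {..<inst_n I} \<longrightarrow> T \<in> inst_F I) \<and>
     (\<forall>i < inst_n I. wf_mdp (inst_M I i))"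

text \<open>A history is the list (most recent first) of the advance events so far:
(index of advanced MDP, action taken, resulting state).\<close>

type_synonym history = "(nat \<times> nat \<times> nat) list"

fun cur :: "cics_instance \<Rightarrow> history \<Rightarrow> nat \<Rightarrow> nat" where
  "cur I [] = (\<lambda>i. m_root (inst_M I i))"
| "cur I ((i, a, s) # h) = (cur I h)(i := s)"

datatype decision = Advance nat "nat pmf" | Halt "nat set"

type_synonym policy = "history \<Rightarrow> decision"

text \<open>Expected disutility with a step budget k; infeasible moves (or running out of
budget) cost infinity.\<close>

fun dis :: "cics_instance \<Rightarrow> policy \<Rightarrow> nat \<Rightarrow> history \<Rightarrow> ennreal" where
  "dis I P 0 h = \<infinity>"
| "dis I P (Suc k) h =
     (let x = cur I h in
      case P h of
        Halt S \<Rightarrow>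
          (if S \<in> inst_F I \<and> (\<forall>i \<in> S. terminal (inst_M I i) (x i))
           then (\<Sum>i \<in> S. m_val (inst_M I i) (x i)) else \<infinity>)
      | Advance i d \<Rightarrow>
          (if i < inst_n I \<and> \<not> terminal (inst_M I i) (x i) \<and>
              set_pmf d \<subseteq> m_acts (inst_M I i) (x i)
           then (\<integral>\<^sup>+ a. (ennreal (m_cost (inst_M I i) a) +
                    (\<integral>\<^sup>+ t. dis I P k ((i, a, t) # h) \<partial>measure_pmf (m_trans (inst_M I i) (x i) a)))
                 \<partial>measure_pmf d)
           else \<infinity>))"

definition disutility :: "cics_instance \<Rightarrow> policy \<Rightarrow> ennreal" where
  "disutility I P = (INF k. dis I P k [])"

definition OPT :: "cics_instance \<Rightarrow> ennreal" where
  "OPT I = (INF P. disutility I P)"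

definition commitment :: "cics_instance \<Rightarrow> (nat \<Rightarrow> nat \<Rightarrow> nat pmf) \<Rightarrow> bool" where
  "commitment I \<pi> \<longleftrightarrow>
     (\<forall>i < inst_n I. \<forall>s \<in> m_states (inst_M I i). \<not> terminal (inst_M I i) s \<longrightarrow>
        set_pmf (\<pi> i s) \<subseteq> m_acts (inst_M I i) s)"

definition committing :: "cics_instance \<Rightarrow> policy \<Rightarrow> bool" where
  "committing I P \<longleftrightarrow> (\<exists>\<pi>. commitment I \<pi> \<and>
     (\<forall>h i d. P h = Advance i d \<longrightarrow> d = \<pi> i (cur I h i)))"

definition ComOPT :: "cics_instance \<Rightarrow> ennreal" where
  "ComOPT I = (INF P \<in> {P. committing I P}. disutility I P)"

definition ComGap :: "cics_instance \<Rightarrow> ennreal" where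
  "ComGap I = ComOPT I / OPT I"

end

theory Submission
  imports Defs
begin

text \<open>The first MDP either takes a safe action (value 1) or gambles (value 0, or \<infinity> with
probability q); the second MDP is a coin (value \<infinity> with probability q, and 1 otherwise).
Adaptively one tosses the coin first and gambles only when the coin can serve as a fallback,
for an expected cost q + (1 - q) q \<le> 2 q, while q is a lower bound for every policy.
A committing policy fixes the action of the first MDP in advance: if it gambles with positive
probability, it also gambles after the coin showed \<infinity>, and with probability q both values are
\<infinity>; if it never gambles, every selection costs at least 1. Hence the gap is about 1/(2 q).
The lower bounds are certified by potentials on joint states that lie below every halting
value and below their own expectation after every admissible advance.\<close>

lemma nn_integral_measure_pmf_eq_top:
  fixes f :: "'a \<Rightarrow> ennreal"
  assumes "a \<in> set_pmf p" "f a = \<top>"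
  shows "(\<integral>\<^sup>+ x. f x \<partial>measure_pmf p) = \<top>"
proof -
  have "ennreal (pmf p a) * f a = (\<integral>\<^sup>+ x. f a * indicator {a} x \<partial>measure_pmf p)"
    by (simp add: emeasure_pmf_single mult.commute)
  also have "\<dots> \<le> (\<integral>\<^sup>+ x. f x \<partial>measure_pmf p)"
    by (rule nn_integral_mono) (simp split: split_indicator)
  finally show ?thesis
    using assms by (simp add: set_pmf_iff top_unique)
qed

lemma ennreal_one_divide_le_divide:
  fixes a b :: ennreal
  assumes "1 \<le> a" "b \<le> ennreal r" "0 < r"
  shows "ennreal (1 / r) \<le> a / b"
proof (cases "b = 0")
  case True
  with assms(1) show ?thesis by auto
next
  case False
  with assms(2,3) obtain s where s: "b = ennreal s" "0 < s" "s \<le> r"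
    by (cases b rule: ennreal_cases) (auto simp: ennreal_le_iff top_unique)
  have "ennreal (1 / r) \<le> ennreal (1 / s)"
    using s by (intro ennreal_leI frac_le) auto
  also have "\<dots> = 1 / b"
    using s by (metis divide_ennreal ennreal_1 zero_le_one)
  also have "\<dots> \<le> a / b"
    using assms(1) by (rule divide_right_mono_ennreal)
  finally show ?thesis .
qed

lemma potential_le_disutility:
  fixes f :: "(nat \<Rightarrow> nat) \<Rightarrow> ennreal"
  assumes halt: "\<And>x S. S \<in> inst_F I \<Longrightarrow> \<forall>i\<in>S. terminal (inst_M I i) (x i) \<Longrightarrow>
      f x \<le> (\<Sum>i\<in>S. m_val (inst_M I i) (x i))"
    and advance: "\<And>h i d. P h = Advance i d \<Longrightarrow> i < inst_n I \<Longrightarrow>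
      \<not> terminal (inst_M I i) (cur I h i) \<Longrightarrow> set_pmf d \<subseteq> m_acts (inst_M I i) (cur I h i) \<Longrightarrow>
      f (cur I h) \<le> (\<integral>\<^sup>+ a. (\<integral>\<^sup>+ t. f ((cur I h)(i := t))
        \<partial>measure_pmf (m_trans (inst_M I i) (cur I h i) a)) \<partial>measure_pmf d)"
  shows "f (cur I []) \<le> disutility I P"
proof -
  have "f (cur I h) \<le> dis I P k h" for k h
  proof (induction k arbitrary: h)
    case 0
    then show ?case by simp
  next
    case (Suc k)
    show ?case
    proof (cases "P h")
      case (Halt S)
      then show ?thesis using halt[of S "cur I h"] by (simp add: Let_def)
    next
      case (Advance i d)
      let ?T = "\<lambda>a. measure_pmf (m_trans (inst_M I i) (cur I h i) a)"
      show ?thesis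
      proof (cases "i < inst_n I \<and> \<not> terminal (inst_M I i) (cur I h i) \<and>
                    set_pmf d \<subseteq> m_acts (inst_M I i) (cur I h i)")
        case True
        have IH: "f ((cur I h)(i := t)) \<le> dis I P k ((i, a, t) # h)" for a t
          using Suc.IH[of "(i, a, t) # h"] by (simp only: cur.simps)
        have "f (cur I h) \<le> (\<integral>\<^sup>+ a. (\<integral>\<^sup>+ t. f ((cur I h)(i := t)) \<partial>?T a) \<partial>measure_pmf d)"
          using advance[OF Advance] True by blast
        also have "\<dots> \<le> (\<integral>\<^sup>+ a. (ennreal (m_cost (inst_M I i) a) +
                          (\<integral>\<^sup>+ t. dis I P k ((i, a, t) # h) \<partial>?T a)) \<partial>measure_pmf d)"
          using IH by (intro nn_integral_mono add_increasing) (auto intro: nn_integral_mono)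
        finally show ?thesis using True Advance by (simp add: Let_def)
      next
        case False
        then show ?thesis using Advance by (auto simp: Let_def)
      qed
    qed
  qed
  then show ?thesis
    unfolding disutility_def by (rule INF_greatest)
qed

text \<open>States of the choice MDP: 0 root, 1 after the safe action, 2 and 3 the good and bad
outcome of the gamble. States of the coin MDP: 0 root, 1 bad, 2 good.\<close>

definition choice_mdp :: "real \<Rightarrow> mdp" where
  "choice_mdp q = \<lparr>m_states = {0, 1, 2, 3}, m_root = 0,
     m_acts = (\<lambda>s. if s = 0 then {1, 2} else {}),
     m_cost = (\<lambda>_. 0),
     m_trans = (\<lambda>s a. if a = 1 then return_pmf 1
                      else map_pmf (\<lambda>b. if b then 3 else 2) (bernoulli_pmf q)),
     m_val = (\<lambda>s. if s = 1 then 1 else if s = 3 then \<infinity> else 0)\<rparr>"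

definition coin_mdp :: "real \<Rightarrow> mdp" where
  "coin_mdp q = \<lparr>m_states = {0, 1, 2}, m_root = 0,
     m_acts = (\<lambda>s. if s = 0 then {0} else {}),
     m_cost = (\<lambda>_. 0),
     m_trans = (\<lambda>s a. map_pmf (\<lambda>b. if b then 1 else 2) (bernoulli_pmf q)),
     m_val = (\<lambda>s. if s = 1 then \<infinity> else if s = 2 then 1 else 0)\<rparr>"

definition gap_instance :: "real \<Rightarrow> cics_instance" where
  "gap_instance q = \<lparr>inst_n = 2, inst_F = {{0}, {1}, {0, 1}},
     inst_M = (\<lambda>i. if i = 0 then choice_mdp q else coin_mdp q)\<rparr>"

lemma gap_instance_simps [simp]:
  "inst_n (gap_instance q) = 2"
  "inst_F (gap_instance q) = {{0}, {1}, {0, 1}}"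
  "inst_M (gap_instance q) 0 = choice_mdp q"
  "inst_M (gap_instance q) (Suc 0) = coin_mdp q"
  by (simp_all add: gap_instance_def)

lemma terminal_gap_instance [simp]: "terminal (inst_M (gap_instance q) i) s \<longleftrightarrow> s \<noteq> 0"
  by (simp add: terminal_def gap_instance_def choice_mdp_def coin_mdp_def)

lemma cur_gap_instance_Nil: "cur (gap_instance q) [] = (\<lambda>i. 0)"
  by (simp add: gap_instance_def choice_mdp_def coin_mdp_def fun_eq_iff)

lemma wf_mdp_of_increasing_edges:
  assumes "finite (m_states M)" "m_root M \<in> m_states M"
    and "\<And>s a. s \<in> m_states M \<Longrightarrow> a \<in> m_acts M s \<Longrightarrow>
      0 \<le> m_cost M a \<and> set_pmf (m_trans M s a) \<subseteq> m_states M \<and> (\<forall>t \<in> set_pmf (m_trans M s a). s < t)"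
    and "\<And>s. finite (m_acts M s)"
  shows "wf_mdp M"
proof -
  have "mdp_edges M \<subseteq> {(s, t). s < t}"
    using assms(3) by (auto simp: mdp_edges_def)
  then have "acyclic (mdp_edges M)"
    by (rule wf_acyclic[OF wf_subset[OF wf_less]])
  with assms show ?thesis
    unfolding wf_mdp_def by blast
qed

lemma wf_gap_instance: "wf_instance (gap_instance q)"
proof -
  have "wf_mdp (choice_mdp q)"
    by (intro wf_mdp_of_increasing_edges) (auto simp: choice_mdp_def split: if_splits)
  moreover have "wf_mdp (coin_mdp q)"
    by (intro wf_mdp_of_increasing_edges) (auto simp: coin_mdp_def split: if_splits)
  moreover have "T \<in> {{0}, {1}, {0, 1}}" if "T \<subseteq> {..<2}" "T \<noteq> {}" for T :: "nat set"
    using that by (auto simp: subset_iff lessThan_def less_2_cases_iff)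
  ultimately show ?thesis
    unfolding wf_instance_def by (auto simp: less_2_cases_iff)
qed

definition adaptive_policy :: "real \<Rightarrow> policy" where
  "adaptive_policy q h = (let x = cur (gap_instance q) h in
     if x 1 = 0 then Advance 1 (return_pmf 0)
     else if x 0 = 0 then Advance 0 (return_pmf (if x 1 = 1 then 1 else 2))
     else if x 0 = 3 then Halt {1} else Halt {0})"

lemma OPT_gap_instance_le:
  assumes "0 < q" "q < 1"
  shows "OPT (gap_instance q) \<le> ennreal (2 * q)"
proof -
  have "OPT (gap_instance q) \<le> dis (gap_instance q) (adaptive_policy q) 3 []"
    unfolding OPT_def disutility_def by (meson INF_lower UNIV_I order_trans)
  also have "\<dots> = ennreal q + ennreal q * ennreal (1 - q)"
    using assms by (simp add: numeral_3_eq_3 adaptive_policy_def Let_def choice_mdp_def coin_mdp_def terminal_def)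
  also have "\<dots> = ennreal (q + q * (1 - q))"
    using assms by (simp add: ennreal_mult[symmetric] ennreal_plus[symmetric] del: ennreal_plus)
  also have "\<dots> \<le> ennreal (2 * q)"
    using assms by (intro ennreal_leI) (simp add: algebra_simps)
  finally show ?thesis .
qed

text \<open>A lower bound on the cost-to-go from a joint state x; the parameters are its values while
the choice MDP is at its root and the coin MDP is at its root, bad, resp. good state.\<close>

definition gap_potential :: "ennreal \<Rightarrow> ennreal \<Rightarrow> ennreal \<Rightarrow> (nat \<Rightarrow> nat) \<Rightarrow> ennreal" where
  "gap_potential c\<^sub>0 c\<^sub>1 c\<^sub>2 x =
     (if x 0 = 0 then (if x 1 = 0 then c\<^sub>0 else if x 1 = 1 then c\<^sub>1 else if x 1 = 2 then c\<^sub>2 else 0)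
      else if x 0 = 1 \<and> x 1 \<le> 2 then 1
      else if x 0 = 3 \<and> x 1 \<le> 1 then \<infinity>
      else 0)"

lemma gap_potential_le_halt:
  assumes "c\<^sub>2 \<le> 1" "S \<in> inst_F (gap_instance q)" "\<forall>i\<in>S. terminal (inst_M (gap_instance q) i) (x i)"
  shows "gap_potential c\<^sub>0 c\<^sub>1 c\<^sub>2 x \<le> (\<Sum>i\<in>S. m_val (inst_M (gap_instance q) i) (x i))"
  using assms by (auto simp: gap_potential_def choice_mdp_def coin_mdp_def)

lemma gap_potential_advance_coin:
  assumes "0 < q" "q < 1" "x 1 = 0"
    and "c\<^sub>0 \<le> ennreal q * c\<^sub>1 + ennreal (1 - q) * c\<^sub>2"
  shows "gap_potential c\<^sub>0 c\<^sub>1 c\<^sub>2 x \<le>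
    (\<integral>\<^sup>+ t. gap_potential c\<^sub>0 c\<^sub>1 c\<^sub>2 (x(1 := t)) \<partial>measure_pmf (m_trans (coin_mdp q) 0 a))"
proof -
  have "ennreal q + ennreal (1 - q) = 1"
    using assms(1,2) by (simp add: ennreal_plus[symmetric] del: ennreal_plus)
  then show ?thesis
    using assms by (auto simp: coin_mdp_def gap_potential_def ennreal_mult_top mult.commute)
qed

lemma gap_potential_advance_choice:
  assumes "0 < q" "q < 1" "x 0 = 0" "set_pmf d \<subseteq> {1, 2}" "c\<^sub>0 \<le> 1" "c\<^sub>2 \<le> 1"
    and "2 \<in> set_pmf d \<Longrightarrow> c\<^sub>2 = 0" "2 \<notin> set_pmf d \<Longrightarrow> c\<^sub>1 \<le> 1"
  shows "gap_potential c\<^sub>0 c\<^sub>1 c\<^sub>2 x \<le> (\<integral>\<^sup>+ a. (\<integral>\<^sup>+ t. gap_potential c\<^sub>0 c\<^sub>1 c\<^sub>2 (x(0 := t))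
    \<partial>measure_pmf (m_trans (choice_mdp q) 0 a)) \<partial>measure_pmf d)"
proof -
  define G where "G a = (\<integral>\<^sup>+ t. gap_potential c\<^sub>0 c\<^sub>1 c\<^sub>2 (x(0 := t))
    \<partial>measure_pmf (m_trans (choice_mdp q) 0 a))" for a
  have G1: "G 1 = gap_potential c\<^sub>0 c\<^sub>1 c\<^sub>2 (x(0 := 1))"
    by (simp add: G_def choice_mdp_def)
  have G2: "G 2 = (if x 1 \<le> 1 then \<top> else 0)"
    using assms(1,2) by (simp add: G_def choice_mdp_def gap_potential_def ennreal_mult_top mult.commute)
  show ?thesis
  proof (cases "x 1 \<le> 1 \<and> 2 \<in> set_pmf d")
    case True
    then have "(\<integral>\<^sup>+ a. G a \<partial>measure_pmf d) = \<top>"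
      using G2 by (intro nn_integral_measure_pmf_eq_top[of 2]) auto
    then show ?thesis
      unfolding G_def by simp
  next
    case False
    have "gap_potential c\<^sub>0 c\<^sub>1 c\<^sub>2 x \<le> G a" if "a \<in> set_pmf d" for a
      using that assms False G1 G2 by (auto simp: gap_potential_def)
    then show ?thesis
      unfolding G_def by (intro measure_pmf.nn_integral_ge_const) (simp add: AE_measure_pmf_iff)
  qed
qed

lemma gap_potential_advance:
  assumes "0 < q" "q < 1" "c\<^sub>0 \<le> 1" "c\<^sub>2 \<le> 1" "c\<^sub>0 \<le> ennreal q * c\<^sub>1 + ennreal (1 - q) * c\<^sub>2"
    and "i < 2" "x i = 0" "set_pmf d \<subseteq> m_acts (inst_M (gap_instance q) i) 0"
    and "i = 0 \<Longrightarrow> (2 \<in> set_pmf d \<longrightarrow> c\<^sub>2 = 0) \<and> (2 \<notin> set_pmf d \<longrightarrow> c\<^sub>1 \<le> 1)"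
  shows "gap_potential c\<^sub>0 c\<^sub>1 c\<^sub>2 x \<le> (\<integral>\<^sup>+ a. (\<integral>\<^sup>+ t. gap_potential c\<^sub>0 c\<^sub>1 c\<^sub>2 (x(i := t))
    \<partial>measure_pmf (m_trans (inst_M (gap_instance q) i) (x i) a)) \<partial>measure_pmf d)"
proof (cases "i = 0")
  case True
  have "set_pmf d \<subseteq> {1, 2}"
    using assms(8) True by (simp add: choice_mdp_def)
  with assms True show ?thesis
    by (simp add: gap_potential_advance_choice)
next
  case False
  with assms(6) have "i = 1" by simp
  have "gap_potential c\<^sub>0 c\<^sub>1 c\<^sub>2 x \<le> (\<integral>\<^sup>+ t. gap_potential c\<^sub>0 c\<^sub>1 c\<^sub>2 (x(1 := t))
    \<partial>measure_pmf (m_trans (coin_mdp q) 0 a))" for a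
    using assms(1,2,5,7) \<open>i = 1\<close> by (intro gap_potential_advance_coin) simp_all
  with \<open>i = 1\<close> assms(7) show ?thesis
    by (simp add: measure_pmf.nn_integral_ge_const)
qed

lemma gap_potential_le_disutility:
  assumes "0 < q" "q < 1" "c\<^sub>0 \<le> 1" "c\<^sub>2 \<le> 1" "c\<^sub>0 \<le> ennreal q * c\<^sub>1 + ennreal (1 - q) * c\<^sub>2"
    and "\<And>h d. P h = Advance 0 d \<Longrightarrow> cur (gap_instance q) h 0 = 0 \<Longrightarrow>
      (2 \<in> set_pmf d \<longrightarrow> c\<^sub>2 = 0) \<and> (2 \<notin> set_pmf d \<longrightarrow> c\<^sub>1 \<le> 1)"
  shows "c\<^sub>0 \<le> disutility (gap_instance q) P"
proof -
  have "gap_potential c\<^sub>0 c\<^sub>1 c\<^sub>2 (cur (gap_instance q) []) \<le> disutility (gap_instance q) P"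
  proof (rule potential_le_disutility, goal_cases halt advance)
    case (halt x S)
    with assms(4) show ?case
      by (rule gap_potential_le_halt)
  next
    case (advance h i d)
    then have "cur (gap_instance q) h i = 0"
      by simp
    with advance assms show ?case
      by (intro gap_potential_advance) auto
  qed
  then show ?thesis
    unfolding cur_gap_instance_Nil by (simp add: gap_potential_def)
qed

lemma OPT_gap_instance_ge:
  assumes "0 < q" "q < 1"
  shows "ennreal q \<le> OPT (gap_instance q)"
  unfolding OPT_def
  by (rule INF_greatest, rule gap_potential_le_disutility[where c\<^sub>1 = 1 and c\<^sub>2 = 0]) (use assms in auto)

lemma ComOPT_gap_instance_ge:
  assumes "0 < q" "q < 1"
  shows "1 \<le> ComOPT (gap_instance q)"
  unfolding ComOPT_def
proof (rule INF_greatest)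
  fix P
  assume "P \<in> {P. committing (gap_instance q) P}"
  then obtain \<pi> where \<pi>: "\<And>h i d. P h = Advance i d \<Longrightarrow> d = \<pi> i (cur (gap_instance q) h i)"
    unfolding committing_def by blast
  show "1 \<le> disutility (gap_instance q) P"
  proof (cases "2 \<in> set_pmf (\<pi> 0 0)")
    case True
    show ?thesis
      by (rule gap_potential_le_disutility[where c\<^sub>1 = \<top> and c\<^sub>2 = 0])
        (use assms True in \<open>auto simp: ennreal_mult_top dest: \<pi>\<close>)
  next
    case False
    have "ennreal q + ennreal (1 - q) = 1"
      using assms by (simp add: ennreal_plus[symmetric] del: ennreal_plus)
    with assms False show ?thesis
      by (intro gap_potential_le_disutility[where c\<^sub>1 = 1 and c\<^sub>2 = 1]) (auto dest: \<pi>)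
  qed
qed

lemma ComGap_gap_instance_ge:
  assumes "0 < q" "q < 1"
  shows "ennreal (1 / (2 * q)) \<le> ComGap (gap_instance q)"
  unfolding ComGap_def
  using ComOPT_gap_instance_ge[OF assms] OPT_gap_instance_le[OF assms]
  by (rule ennreal_one_divide_le_divide) (use assms in simp)

theorem theorem6:
  fixes M :: real
  assumes "M > 0"
  shows "\<exists>I. wf_instance I \<and> inst_n I = 2 \<and> inst_F I = {{0}, {1}, {0, 1}} \<and>
             0 < OPT I \<and> OPT I < \<infinity> \<and> ennreal M \<le> ComGap I"
proof -
  define q where "q = 1 / (2 * M + 2)"
  have q: "0 < q" "q < 1"
    using assms by (simp_all add: q_def)
  have "ennreal M \<le> ennreal (1 / (2 * q))"
    using assms by (intro ennreal_leI) (simp add: q_def)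
  also have "\<dots> \<le> ComGap (gap_instance q)"
    using q by (rule ComGap_gap_instance_ge)
  finally have "ennreal M \<le> ComGap (gap_instance q)" .
  moreover have "0 < OPT (gap_instance q)"
    using OPT_gap_instance_ge[OF q] q(1) by (metis ennreal_less_zero_iff order_less_le_trans)
  moreover have "OPT (gap_instance q) < \<infinity>"
    using OPT_gap_instance_le[OF q] by (simp add: order_le_less_trans)
  ultimately show ?thesis
    using wf_gap_instance[of q] by auto
qed

end
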